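(* Let $P$ be a valid path, let $V_P$ be the revenue computed by \textsc{MaxRev}$(P)$, and suppose $V_P<\frac{1}{\alpha(m_T^P)}B(P)$. Then at least one of the two paths $P'\in\{P_1,P_2\}$ returned by \textsc{TollPartition} applied to $P$ satisfies $$\frac{1}{\alpha(m_T^{P'})}B(P')\ \ge\ \frac{1}{\alpha(m_T^P)}B(P).$$
   Context: Setting: $G=(V,A)$ is a directed multigraph with $A=A_T\cup A_U$ partitioned into toll arcs and toll-free arcs, fixed costs $c:A_T\to\mathbf{N}$, $d:A_U\to\mathbf{N}$, and vertices $s,t$ such that there is an $s$–$t$ path using only toll-free arcs. Under a nonnegative toll vector $T$ a toll arc $e$ costs $c(e)+T(e)$ and a toll-free arc costs $d(e)$; path length is the sum of arc costs. $\mathcal{N}_T(P)$ is the network with all toll arcs not on $P$ deleted. An $s$–$t$ path $P$ is valid if it contains $m_T^P\ge1$ toll arcs and is a shortest $s$–$t$ path in $\mathcal{N}_0(P)$. For a path $P$ with toll arcs $\tau_1,\dots,\tau_m$ (in traversal order, $m=m_T^P$), set $\mathrm{TERM}(\tau_0)=s$, $\mathrm{INIT}(\tau_{m+1})=t$; $\mathcal{U}_{i,j}$ ($0\le i<j\le m+1$) is the length of a shortest toll-free path from $\mathrm{TERM}(\tau_i)$ to $\mathrm{INIT}(\tau_j)$ ($+\infty$ if none), $\upsilon_{i,j}$ is such a path, and $\mathcal{L}_{k,l}=\sum_{i=k}^{l-1}\mathcal{U}_{i,i+1}+\sum_{i=k+1}^{l-1}c(\tau_i)$. Let $\mathcal{L}_\infty$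 be the length of a shortest toll-free $s$–$t$ path and $\mathcal{L}(P)$ the length of $P$ with all tolls zero; $B(P)=\mathcal{L}_\infty-\mathcal{L}(P)$. Define $\alpha(1)=1$ and, for $k\ge2$, $\alpha(k)=\frac12\max\{1+\alpha(i)+\alpha(j):\ 0<i\le j<k,\ i+j\le k\}$. \textsc{MaxRev}$(P)$: set $k:=1$; while $k<m+1$: compute $t_k=\min_{0\le i<k<j\le m+1}\{\mathcal{U}_{i,j}-\mathcal{L}_{i,j}-\sum_{l=i+1}^{k-1}t_l\}$, let $(i'(k),j'(k))$ be the minimizing pair (ties broken by largest $j$, then smallest $i$), set $t_l:=0$ and $(i'(l),j'(l)):=(i'(k),j'(k))$ for all $k<l<j'(k)$, and set $k:=j'(k)$. Output tolls $T(\tau_k)=t_k$ on $P$ ($+\infty$ off $P$), revenue $V_P=\sum_{k=1}^m t_k$, and pairs $(i'(k),j'(k))_{k=1}^m$. \textsc{TollPartition}$(P)$: starting from $l:=m$, repeatedly record the pair $(i'(l),j'(l))$ and set $l:=i'(l)$ until $l=0$; let $q$ be the number of recorded pairs and let $(i(1),j(1)),\dots,(i(q),j(q))$ be the recorded pairs in reverse order of recording (so $i(1)=0$, $j(q)=m+1$). $P_1$ is the $s$–$t$ path that uses $\upsilon_{i(h),j(h)}$ for all odd $h$ and follows $P$ in between (from $\mathrm{INIT}(\tau_{j(h)})$ to $\mathrm{TERM}(\tau_{i(h+2)})$, from $s$ to $\mathrm{TERM}(\tau_{i(h)})$ before the first, and from $\mathrm{INIT}(\tau_{j(h)})$ to $t$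 after the last); $P_2$ is constructed in the same way from the even indices $h$. *)

theory Defs
  imports Complex_Main "HOL-Library.Extended_Real"
begin

text \<open>Arcs have type 'e, vertices type 'v; ini e and ter e are the tail (INIT) and head (TERM)
 of arc e.  Parallel arcs are allowed (multigraph).  A = AT \<union> AU, with AT the toll arcs
 (fixed cost c) and AU the toll-free arcs (cost d).\<close>

definition toll_network ::
  "'v set \<Rightarrow> 'e set \<Rightarrow> 'e set \<Rightarrow> ('e \<Rightarrow> 'v) \<Rightarrow> ('e \<Rightarrow> 'v) \<Rightarrow> 'v \<Rightarrow> 'v \<Rightarrow> bool" where
  "toll_network V AT AU ini ter s t \<longleftrightarrow>
     finite V \<and> finite AT \<and> finite AU \<and> AT \<inter> AU = {} \<and>
     (\<forall>e \<in> AT \<union> AU. ini e \<in> V \<and> ter e \<in> V) \<and> s \<in> V \<and> t \<in> V"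

fun walk :: "('e \<Rightarrow> 'v) \<Rightarrow> ('e \<Rightarrow> 'v) \<Rightarrow> 'e set \<Rightarrow> 'v \<Rightarrow> 'e list \<Rightarrow> 'v \<Rightarrow> bool" where
  "walk ini ter F u [] v \<longleftrightarrow> u = v"
| "walk ini ter F u (e # p) v \<longleftrightarrow> e \<in> F \<and> ini e = u \<and> walk ini ter F (ter e) p v"

text \<open>Length of an arc list when all tolls are zero.\<close>
definition plen :: "'e set \<Rightarrow> ('e \<Rightarrow> nat) \<Rightarrow> ('e \<Rightarrow> nat) \<Rightarrow> 'e list \<Rightarrow> nat" where
  "plen AT c d p = (\<Sum>e \<leftarrow> p. if e \<in> AT then c e else d e)"

text \<open>Length of a shortest toll-free walk from u to v (\<infinity> if none).\<close>
definition dist_tf ::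
  "'e set \<Rightarrow> ('e \<Rightarrow> 'v) \<Rightarrow> ('e \<Rightarrow> 'v) \<Rightarrow> 'e set \<Rightarrow> ('e \<Rightarrow> nat) \<Rightarrow> ('e \<Rightarrow> nat) \<Rightarrow> 'v \<Rightarrow> 'v \<Rightarrow> ereal" where
  "dist_tf AT ini ter AU c d u v =
     (INF p \<in> {p. walk ini ter AU u p v}. ereal (real (plen AT c d p)))"

definition toll_pos :: "'e set \<Rightarrow> 'e list \<Rightarrow> nat list" where
  "toll_pos AT P = [i \<leftarrow> [0..<length P]. P ! i \<in> AT]"

definition mT :: "'e set \<Rightarrow> 'e list \<Rightarrow> nat" where
  "mT AT P = length (toll_pos AT P)"

text \<open>tau k is the k-th toll arc of P (1 \<le> k \<le> m).\<close>
definition tau :: "'e set \<Rightarrow> 'e list \<Rightarrow> nat \<Rightarrow> 'e" where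
  "tau AT P k = P ! (toll_pos AT P ! (k - 1))"

definition TERMv :: "'e set \<Rightarrow> ('e \<Rightarrow> 'v) \<Rightarrow> 'v \<Rightarrow> 'e list \<Rightarrow> nat \<Rightarrow> 'v" where
  "TERMv AT ter s P i = (if i = 0 then s else ter (tau AT P i))"

definition INITv :: "'e set \<Rightarrow> ('e \<Rightarrow> 'v) \<Rightarrow> 'v \<Rightarrow> 'e list \<Rightarrow> nat \<Rightarrow> 'v" where
  "INITv AT ini t P j = (if j = Suc (mT AT P) then t else ini (tau AT P j))"

definition UU ::
  "'e set \<Rightarrow> 'e set \<Rightarrow> ('e \<Rightarrow> 'v) \<Rightarrow> ('e \<Rightarrow> 'v) \<Rightarrow> ('e \<Rightarrow> nat) \<Rightarrow> ('e \<Rightarrow> nat) \<Rightarrow> 'v \<Rightarrow> 'v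
    \<Rightarrow> 'e list \<Rightarrow> nat \<Rightarrow> nat \<Rightarrow> ereal" where
  "UU AT AU ini ter c d s t P i j =
     dist_tf AT ini ter AU c d (TERMv AT ter s P i) (INITv AT ini t P j)"

definition LL ::
  "'e set \<Rightarrow> 'e set \<Rightarrow> ('e \<Rightarrow> 'v) \<Rightarrow> ('e \<Rightarrow> 'v) \<Rightarrow> ('e \<Rightarrow> nat) \<Rightarrow> ('e \<Rightarrow> nat) \<Rightarrow> 'v \<Rightarrow> 'v
    \<Rightarrow> 'e list \<Rightarrow> nat \<Rightarrow> nat \<Rightarrow> ereal" where
  "LL AT AU ini ter c d s t P k l =
     (\<Sum>i \<in> {k..<l}. UU AT AU ini ter c d s t P i (Suc i))
     + (\<Sum>i \<in> {Suc k..<l}. ereal (real (c (tau AT P i))))"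

definition Linf ::
  "'e set \<Rightarrow> 'e set \<Rightarrow> ('e \<Rightarrow> 'v) \<Rightarrow> ('e \<Rightarrow> 'v) \<Rightarrow> ('e \<Rightarrow> nat) \<Rightarrow> ('e \<Rightarrow> nat) \<Rightarrow> 'v \<Rightarrow> 'v \<Rightarrow> ereal" where
  "Linf AT AU ini ter c d s t = dist_tf AT ini ter AU c d s t"

definition BB ::
  "'e set \<Rightarrow> 'e set \<Rightarrow> ('e \<Rightarrow> 'v) \<Rightarrow> ('e \<Rightarrow> 'v) \<Rightarrow> ('e \<Rightarrow> nat) \<Rightarrow> ('e \<Rightarrow> nat) \<Rightarrow> 'v \<Rightarrow> 'v
    \<Rightarrow> 'e list \<Rightarrow> ereal" where
  "BB AT AU ini ter c d s t P = Linf AT AU ini ter c d s t - ereal (real (plen AT c d P))"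

text \<open>Valid path: an s-t walk with at least one toll arc which is a shortest s-t walk in N_0(P),
 the network in which all toll arcs not on P are deleted.\<close>
definition valid ::
  "'e set \<Rightarrow> 'e set \<Rightarrow> ('e \<Rightarrow> 'v) \<Rightarrow> ('e \<Rightarrow> 'v) \<Rightarrow> ('e \<Rightarrow> nat) \<Rightarrow> ('e \<Rightarrow> nat) \<Rightarrow> 'v \<Rightarrow> 'v
    \<Rightarrow> 'e list \<Rightarrow> bool" where
  "valid AT AU ini ter c d s t P \<longleftrightarrow>
     walk ini ter (AT \<union> AU) s P t \<and> mT AT P \<ge> 1 \<and>
     (\<forall>p. walk ini ter (AU \<union> (AT \<inter> set P)) s p t \<longrightarrow> plen AT c d P \<le> plen AT c d p)"

text \<open>alpha 1 = 1 and, for k \<ge> 2, alpha k = 1/2 max {1 + alpha i + alpha j : 0 < i \<le> j < k, i + j \<le> k}.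
 (The value at 0 is irrelevant and is set to 1.)\<close>
function alpha :: "nat \<Rightarrow> real" where
  "alpha k = (if k \<le> 1 then 1 else
     (1/2) * Max ((\<lambda>ij. 1 + alpha (fst ij) + alpha (snd ij)) `
                  {ij. 0 < fst ij \<and> fst ij \<le> snd ij \<and> snd ij < k \<and> fst ij + snd ij \<le> k}))"
  by pat_completeness auto
termination by (relation "measure id") auto

text \<open>One run of the while loop of MaxRev, with explicit fuel (the loop variable k strictly
 increases and stays \<le> m+1, so m+1 rounds suffice).  U and L are U_{i,j} and L_{i,j};
 the state consists of k, the values t_l and the pairs (i'(l), j'(l)).\<close>
fun maxrev_loop ::
  "nat \<Rightarrow> nat \<Rightarrow> (nat \<Rightarrow> nat \<Rightarrow> ereal) \<Rightarrow> (nat \<Rightarrow> nat \<Rightarrow> ereal) \<Rightarrow> nat \<Rightarrow> (nat \<Rightarrow> ereal)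
     \<Rightarrow> (nat \<Rightarrow> nat \<times> nat) \<Rightarrow> (nat \<Rightarrow> ereal) \<times> (nat \<Rightarrow> nat \<times> nat)" where
  "maxrev_loop 0 m U L k tt pr = (tt, pr)"
| "maxrev_loop (Suc f) m U L k tt pr =
     (if k < Suc m then
        (let val = (\<lambda>ij. U (fst ij) (snd ij) - L (fst ij) (snd ij) - (\<Sum>l \<in> {Suc (fst ij)..<k}. tt l));
             S = {ij. fst ij < k \<and> k < snd ij \<and> snd ij \<le> Suc m};
             mn = Min (val ` S);
             best = {ij \<in> S. val ij = mn};
             jb = Max (snd ` best);
             ib = Min {i. (i, jb) \<in> best};
             tt' = (\<lambda>l. if l = k then mn else if k < l \<and> l < jb then 0 else tt l);
             pr' = (\<lambda>l. if k \<le> l \<and> l < jb then (ib, jb) else pr l)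
         in maxrev_loop f m U L jb tt' pr')
      else (tt, pr))"

definition maxrev ::
  "'e set \<Rightarrow> 'e set \<Rightarrow> ('e \<Rightarrow> 'v) \<Rightarrow> ('e \<Rightarrow> 'v) \<Rightarrow> ('e \<Rightarrow> nat) \<Rightarrow> ('e \<Rightarrow> nat) \<Rightarrow> 'v \<Rightarrow> 'v
    \<Rightarrow> 'e list \<Rightarrow> (nat \<Rightarrow> ereal) \<times> (nat \<Rightarrow> nat \<times> nat)" where
  "maxrev AT AU ini ter c d s t P =
     maxrev_loop (Suc (mT AT P)) (mT AT P)
       (UU AT AU ini ter c d s t P) (LL AT AU ini ter c d s t P) 1 (\<lambda>_. 0) (\<lambda>_. (0, 0))"

definition revenue ::
  "'e set \<Rightarrow> 'e set \<Rightarrow> ('e \<Rightarrow> 'v) \<Rightarrow> ('e \<Rightarrow> 'v) \<Rightarrow> ('e \<Rightarrow> nat) \<Rightarrow> ('e \<Rightarrow> nat) \<Rightarrow> 'v \<Rightarrow> 'v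
    \<Rightarrow> 'e list \<Rightarrow> ereal" where
  "revenue AT AU ini ter c d s t P =
     (\<Sum>k \<in> {1..mT AT P}. fst (maxrev AT AU ini ter c d s t P) k)"

fun record_pairs :: "nat \<Rightarrow> (nat \<Rightarrow> nat \<times> nat) \<Rightarrow> nat \<Rightarrow> (nat \<times> nat) list" where
  "record_pairs 0 pr l = []"
| "record_pairs (Suc f) pr l = (if l = 0 then [] else pr l # record_pairs f pr (fst (pr l)))"

definition partition_pairs ::
  "'e set \<Rightarrow> 'e set \<Rightarrow> ('e \<Rightarrow> 'v) \<Rightarrow> ('e \<Rightarrow> 'v) \<Rightarrow> ('e \<Rightarrow> nat) \<Rightarrow> ('e \<Rightarrow> nat) \<Rightarrow> 'v \<Rightarrow> 'v
    \<Rightarrow> 'e list \<Rightarrow> (nat \<times> nat) list" where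
  "partition_pairs AT AU ini ter c d s t P =
     rev (record_pairs (Suc (mT AT P)) (snd (maxrev AT AU ini ter c d s t P)) (mT AT P))"

text \<open>Position (in the arc list P) where the part of P starting at INIT(tau_j) begins,
 and position (exclusive) where the part of P ending at TERM(tau_i) ends.\<close>
definition seg_start :: "'e set \<Rightarrow> 'e list \<Rightarrow> nat \<Rightarrow> nat" where
  "seg_start AT P j = (if j = Suc (mT AT P) then length P else toll_pos AT P ! (j - 1))"

definition seg_end :: "'e set \<Rightarrow> 'e list \<Rightarrow> nat \<Rightarrow> nat" where
  "seg_end AT P i = (if i = 0 then 0 else Suc (toll_pos AT P ! (i - 1)))"

text \<open>Given pairs (i_1,j_1),...,(i_r,j_r) and the chosen toll-free paths ups i j
 (= upsilon_{i,j}), build the s-t path that follows P from position st up to TERM(tau_{i_1}),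
 uses upsilon_{i_1,j_1}, follows P from INIT(tau_{j_1}) to TERM(tau_{i_2}), ..., and after
 upsilon_{i_r,j_r} follows P from INIT(tau_{j_r}) to t.\<close>
fun splice :: "'e set \<Rightarrow> 'e list \<Rightarrow> (nat \<Rightarrow> nat \<Rightarrow> 'e list) \<Rightarrow> nat \<Rightarrow> (nat \<times> nat) list \<Rightarrow> 'e list" where
  "splice AT P ups st [] = drop st P"
| "splice AT P ups st (ij # ps) =
     drop st (take (seg_end AT P (fst ij)) P) @ ups (fst ij) (snd ij)
     @ splice AT P ups (seg_start AT P (snd ij)) ps"

text \<open>P_1 uses the pairs with odd index h (1-based), P_2 those with even index h.\<close>
definition P1 ::
  "'e set \<Rightarrow> 'e set \<Rightarrow> ('e \<Rightarrow> 'v) \<Rightarrow> ('e \<Rightarrow> 'v) \<Rightarrow> ('e \<Rightarrow> nat) \<Rightarrow> ('e \<Rightarrow> nat) \<Rightarrow> 'v \<Rightarrow> 'v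
    \<Rightarrow> 'e list \<Rightarrow> (nat \<Rightarrow> nat \<Rightarrow> 'e list) \<Rightarrow> 'e list" where
  "P1 AT AU ini ter c d s t P ups =
     (let ps = partition_pairs AT AU ini ter c d s t P
      in splice AT P ups 0 [ps ! h. h \<leftarrow> [0..<length ps], even h])"

definition P2 ::
  "'e set \<Rightarrow> 'e set \<Rightarrow> ('e \<Rightarrow> 'v) \<Rightarrow> ('e \<Rightarrow> 'v) \<Rightarrow> ('e \<Rightarrow> nat) \<Rightarrow> ('e \<Rightarrow> nat) \<Rightarrow> 'v \<Rightarrow> 'v
    \<Rightarrow> 'e list \<Rightarrow> (nat \<Rightarrow> nat \<Rightarrow> 'e list) \<Rightarrow> 'e list" where
  "P2 AT AU ini ter c d s t P ups =
     (let ps = partition_pairs AT AU ini ter c d s t P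
      in splice AT P ups 0 [ps ! h. h \<leftarrow> [0..<length ps], odd h])"

definition upsilon_choice ::
  "'e set \<Rightarrow> 'e set \<Rightarrow> ('e \<Rightarrow> 'v) \<Rightarrow> ('e \<Rightarrow> 'v) \<Rightarrow> ('e \<Rightarrow> nat) \<Rightarrow> ('e \<Rightarrow> nat) \<Rightarrow> 'v \<Rightarrow> 'v
    \<Rightarrow> 'e list \<Rightarrow> (nat \<Rightarrow> nat \<Rightarrow> 'e list) \<Rightarrow> bool" where
  "upsilon_choice AT AU ini ter c d s t P ups \<longleftrightarrow>
     (\<forall>i j. i < j \<and> j \<le> Suc (mT AT P) \<and> UU AT AU ini ter c d s t P i j < \<infinity> \<longrightarrow>
        walk ini ter AU (TERMv AT ter s P i) (ups i j) (INITv AT ini t P j) \<and>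
        ereal (real (plen AT c d (ups i j))) = UU AT AU ini ter c d s t P i j)"

end

theory Submission
  imports Defs
begin

text \<open>
  For each pair \<open>(i, j)\<close> recorded by TollPartition, MaxRev has put exactly
  \<open>U\<^sub>i\<^sub>,\<^sub>j - L\<^sub>i\<^sub>,\<^sub>j\<close> of toll on the arcs strictly between \<open>\<tau>\<^sub>i\<close> and \<open>\<tau>\<^sub>j\<close>.
  Since \<open>P\<close> is shortest in \<open>N\<^sub>0(P)\<close>, the stretch of \<open>P\<close> from \<open>TERM(\<tau>\<^sub>i)\<close> to
  \<open>INIT(\<tau>\<^sub>j)\<close> has zero-toll length between \<open>L\<^sub>i\<^sub>,\<^sub>j\<close> and \<open>U\<^sub>i\<^sub>,\<^sub>j\<close>, so replacing it by
  \<open>\<upsilon>\<^sub>i\<^sub>,\<^sub>j\<close> lengthens the path by at most that toll and removes \<open>j - i - 1\<close> toll arcs.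
  Recorded pairs of equal parity are disjoint, and all recorded pairs together cover every
  toll arc and all of \<open>V\<^sub>P\<close>.  Hence, with at least two pairs, \<open>P\<^sub>1\<close> and \<open>P\<^sub>2\<close> have
  \<open>m\<^sub>1, m\<^sub>2 < m\<close> and \<open>m\<^sub>1 + m\<^sub>2 \<le> m\<close> toll arcs, and \<open>B(P\<^sub>1) + B(P\<^sub>2) \<ge> 2 B(P) - V\<^sub>P\<close>.
  Together with \<open>V\<^sub>P < B(P) / \<alpha>(m)\<close> and the recursion \<open>1 + \<alpha>(m\<^sub>1) + \<alpha>(m\<^sub>2) \<le> 2 \<alpha>(m)\<close>
  this forces \<open>B(P\<^sub>h) / \<alpha>(m\<^sub>h) \<ge> B(P) / \<alpha>(m)\<close> for some \<open>h\<close>.  With a single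
  recorded pair, \<open>P\<^sub>2 = P\<close>.
\<close>

section \<open>Walks\<close>


lemma walk_append:
  "walk ini ter F u (xs @ ys) v \<longleftrightarrow> (\<exists>w. walk ini ter F u xs w \<and> walk ini ter F w ys v)"
  by (induction xs arbitrary: u) auto

lemma walk_subset: "walk ini ter F u p v \<Longrightarrow> set p \<subseteq> F"
  by (induction p arbitrary: u) auto

lemma walk_mono: "walk ini ter F u p v \<Longrightarrow> set p \<subseteq> G \<Longrightarrow> walk ini ter G u p v"
  by (induction p arbitrary: u) auto

lemma walk_restrict:
  assumes "walk ini ter (A \<union> B) u p v" and "set p \<subseteq> S"
  shows "walk ini ter (B \<union> (A \<inter> S)) u p v"
  using assms walk_subset[OF assms(1)] by (auto intro: walk_mono[OF assms(1)])

definition walk_vertex :: "('e \<Rightarrow> 'v) \<Rightarrow> 'v \<Rightarrow> 'e list \<Rightarrow> nat \<Rightarrow> 'v" where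
  "walk_vertex ter u p n = (if n = 0 then u else ter (p ! (n - 1)))"

lemma walk_take_drop:
  assumes "walk ini ter F u p v" and "n \<le> length p"
  shows "walk ini ter F u (take n p) (walk_vertex ter u p n)"
    and "walk ini ter F (walk_vertex ter u p n) (drop n p) v"
  using assms
proof (induction p arbitrary: u n)
  case (Cons e p)
  case 1
  then show ?case
    using Cons.IH(1)[of "ter e" "n - 1"] by (cases n) (auto simp: walk_vertex_def nth_Cons')
next
  case (Cons e p)
  case 2
  then show ?case
    using Cons.IH(2)[of "ter e" "n - 1"] by (cases n) (auto simp: walk_vertex_def nth_Cons')
qed (auto simp: walk_vertex_def)

lemma walk_vertex_length: "walk ini ter F u p v \<Longrightarrow> walk_vertex ter u p (length p) = v"
  using walk_take_drop(2)[of ini ter F u p v "length p"] by simp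

lemma ini_nth_walk:
  assumes "walk ini ter F u p v" and "n < length p"
  shows "ini (p ! n) = walk_vertex ter u p n"
proof -
  have "walk ini ter F (walk_vertex ter u p n) (p ! n # drop (Suc n) p) v"
    using walk_take_drop(2)[OF assms(1), of n] assms(2) by (simp add: Cons_nth_drop_Suc)
  then show ?thesis by simp
qed

lemma walk_drop_take:
  assumes "walk ini ter F u p v" and "a \<le> b" and "b \<le> length p"
  shows "walk ini ter F (walk_vertex ter u p a) (drop a (take b p)) (walk_vertex ter u p b)"
proof -
  have "walk ini ter F u (take b p) (walk_vertex ter u p b)"
    using walk_take_drop(1)[OF assms(1,3)] .
  moreover have "walk_vertex ter u (take b p) a = walk_vertex ter u p a"
    using assms(2,3) by (simp add: walk_vertex_def)
  ultimately show ?thesis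
    using walk_take_drop(2)[of ini ter F u "take b p" _ a] assms(2,3) by fastforce
qed

section \<open>Toll arcs along a path\<close>

lemma take_eq_take_append_drop_take: "a \<le> b \<Longrightarrow> take b xs = take a xs @ drop a (take b xs)"
  by (metis append_take_drop_id min.absorb1 take_take)

lemma mT_eq_length_filter: "mT AT p = length (filter (\<lambda>e. e \<in> AT) p)"
proof -
  have "filter (\<lambda>e. e \<in> AT) p = map ((!) p) (toll_pos AT p)"
    by (subst map_nth[symmetric]) (simp add: toll_pos_def filter_map comp_def)
  then show ?thesis by (simp add: mT_def)
qed

lemma mT_Nil [simp]: "mT AT [] = 0"
  by (simp add: mT_eq_length_filter)

lemma mT_append [simp]: "mT AT (xs @ ys) = mT AT xs + mT AT ys"
  by (simp add: mT_eq_length_filter)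

lemma mT_eq_0_iff: "mT AT p = 0 \<longleftrightarrow> set p \<inter> AT = {}"
  by (auto simp: mT_eq_length_filter filter_empty_conv)

lemma plen_Nil [simp]: "plen AT c d [] = 0"
  by (simp add: plen_def)

lemma plen_append [simp]: "plen AT c d (xs @ ys) = plen AT c d xs + plen AT c d ys"
  by (simp add: plen_def)

lemma plen_Cons [simp]: "plen AT c d (e # p) = (if e \<in> AT then c e else d e) + plen AT c d p"
  by (simp add: plen_def)

lemma sorted_toll_pos: "sorted_wrt (<) (toll_pos AT p)"
  unfolding toll_pos_def by (rule sorted_wrt_filter) (rule sorted_wrt_upt)

lemma toll_pos_nth:
  "k < mT AT p \<Longrightarrow> toll_pos AT p ! k < length p \<and> p ! (toll_pos AT p ! k) \<in> AT"
  using nth_mem[of k "toll_pos AT p"] by (simp add: mT_def toll_pos_def)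

lemma toll_pos_take: "toll_pos AT (take n p) = filter (\<lambda>i. i < n) (toll_pos AT p)"
proof -
  define k where "k = min (length p) n"
  have "[0..<length p] = [0..<k] @ [k..<length p]"
    by (metis k_def le0 min.cobounded1 upt_add_eq_append le_add_diff_inverse)
  moreover have "filter (\<lambda>i. i < n \<and> p ! i \<in> AT) [k..<length p] = []"
    by (auto simp: k_def filter_empty_conv)
  moreover have "filter (\<lambda>i. i < n \<and> p ! i \<in> AT) [0..<k] = filter (\<lambda>i. take n p ! i \<in> AT) [0..<k]"
    by (rule filter_cong) (auto simp: k_def)
  ultimately show ?thesis
    by (simp add: toll_pos_def filter_filter conj_commute k_def)
qed

lemma filter_less_nth_sorted:
  fixes xs :: "nat list"
  assumes "sorted_wrt (<) xs" and "k < length xs" 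
  shows "filter (\<lambda>i. i < xs ! k) xs = take k xs"
  using assms
proof (induction xs arbitrary: k)
  case (Cons x xs)
  then show ?case
    by (cases k) (auto intro!: filter_False)
qed simp

lemma mT_take_toll_pos: "k < mT AT p \<Longrightarrow> mT AT (take (toll_pos AT p ! k) p) = k"
  using toll_pos_nth[of k AT p] filter_less_nth_sorted[OF sorted_toll_pos, of k AT p]
  by (simp add: mT_def toll_pos_take)

lemma mT_take_Suc_toll_pos: "k < mT AT p \<Longrightarrow> mT AT (take (Suc (toll_pos AT p ! k)) p) = Suc k"
proof -
  assume k: "k < mT AT p"
  then have "take (Suc (toll_pos AT p ! k)) p = take (toll_pos AT p ! k) p @ [p ! (toll_pos AT p ! k)]"
    using toll_pos_nth[OF k] by (simp add: take_Suc_conv_app_nth)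
  then show ?thesis
    using k toll_pos_nth[OF k] by (simp add: mT_take_toll_pos mT_eq_length_filter[of AT "[_]"])
qed

lemma toll_pos_strict_mono: "k < k' \<Longrightarrow> k' < mT AT p \<Longrightarrow> toll_pos AT p ! k < toll_pos AT p ! k'"
  using sorted_toll_pos[of AT p] by (simp add: sorted_wrt_iff_nth_less mT_def)

lemma seg_end_le_length: "i \<le> mT AT p \<Longrightarrow> seg_end AT p i \<le> length p"
  using toll_pos_nth[of "i - 1" AT p] by (auto simp: seg_end_def Suc_le_eq)

lemma mT_take_seg_end: "i \<le> mT AT p \<Longrightarrow> mT AT (take (seg_end AT p i) p) = i"
  using mT_take_Suc_toll_pos[of "i - 1" AT p] by (auto simp: seg_end_def)

lemma seg_start_le_length:
  assumes "0 < j" and "j \<le> Suc (mT AT p)"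
  shows "seg_start AT p j \<le> length p"
proof (cases "j = Suc (mT AT p)")
  case False
  then have "j - 1 < mT AT p" using assms by simp
  with False show ?thesis using toll_pos_nth[of "j - 1" AT p] by (simp add: seg_start_def)
qed (simp add: seg_start_def)

lemma mT_take_seg_start:
  "0 < j \<Longrightarrow> j \<le> Suc (mT AT p) \<Longrightarrow> mT AT (take (seg_start AT p j) p) = j - 1"
  using mT_take_toll_pos[of "j - 1" AT p] by (auto simp: seg_start_def)

lemma seg_end_le_seg_start: "i < j \<Longrightarrow> j \<le> Suc (mT AT p) \<Longrightarrow> seg_end AT p i \<le> seg_start AT p j"
  using toll_pos_strict_mono[of "i - 1" "j - 1" AT p] toll_pos_nth[of "i - 1" AT p]
  by (auto simp: seg_end_def seg_start_def Suc_le_eq)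

lemma seg_start_le_seg_end:
  assumes "0 < j" and "j \<le> i" and "i \<le> mT AT p"
  shows "seg_start AT p j \<le> seg_end AT p i"
proof (cases "j = i")
  case False
  then have "toll_pos AT p ! (j - 1) < toll_pos AT p ! (i - 1)"
    using assms by (intro toll_pos_strict_mono) simp_all
  then show ?thesis using assms by (simp add: seg_end_def seg_start_def)
qed (use assms in \<open>simp add: seg_end_def seg_start_def\<close>)

lemma nth_seg_start:
  "0 < j \<Longrightarrow> j \<le> mT AT p \<Longrightarrow> seg_start AT p j < length p \<and> p ! seg_start AT p j = tau AT p j"
  using toll_pos_nth[of "j - 1" AT p] by (simp add: seg_start_def tau_def)

lemma tau_in_tolls: "0 < j \<Longrightarrow> j \<le> mT AT p \<Longrightarrow> tau AT p j \<in> AT"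
  using toll_pos_nth[of "j - 1" AT p] by (simp add: tau_def)

text \<open>The stretch of \<open>p\<close> from \<open>TERM(\<tau>\<^sub>i)\<close> to \<open>INIT(\<tau>\<^sub>j)\<close>, where \<open>TERM(\<tau>\<^sub>0)\<close> is the
  start and \<open>INIT(\<tau>\<^sub>m\<^sub>+\<^sub>1)\<close> the end of \<open>p\<close>.\<close>

definition subpath :: "'e set \<Rightarrow> 'e list \<Rightarrow> nat \<Rightarrow> nat \<Rightarrow> 'e list" where
  "subpath AT p i j = drop (seg_end AT p i) (take (seg_start AT p j) p)"

lemma take_seg_start_eq:
  "i < j \<Longrightarrow> j \<le> Suc (mT AT p) \<Longrightarrow>
    take (seg_start AT p j) p = take (seg_end AT p i) p @ subpath AT p i j"
  unfolding subpath_def by (rule take_eq_take_append_drop_take[OF seg_end_le_seg_start])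

lemma mT_subpath: "i < j \<Longrightarrow> j \<le> Suc (mT AT p) \<Longrightarrow> mT AT (subpath AT p i j) = j - Suc i"
  using arg_cong[OF take_seg_start_eq, of i j AT p "mT AT"]
  by (simp add: mT_take_seg_end mT_take_seg_start)

lemma subpath_Suc:
  assumes "i < j" and "j \<le> mT AT p"
  shows "subpath AT p i (Suc j) = subpath AT p i j @ tau AT p j # subpath AT p j (Suc j)"
proof -
  have "take (seg_end AT p j) p = take (seg_start AT p j) p @ [tau AT p j]"
    using nth_seg_start[of j AT p] assms
    by (simp add: seg_end_def seg_start_def take_Suc_conv_app_nth)
  then have "take (seg_end AT p i) p @ subpath AT p i (Suc j)
      = take (seg_end AT p i) p @ subpath AT p i j @ tau AT p j # subpath AT p j (Suc j)"
    using take_seg_start_eq[of i "Suc j" AT p] take_seg_start_eq[of j "Suc j" AT p]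
      take_seg_start_eq[of i j AT p] assms by simp
  then show ?thesis by simp
qed

section \<open>Splicing detours into a path\<close>

lemma map_filter_comprehension: "[f x. x \<leftarrow> xs, P x] = map f (filter P xs)"
  by (induction xs) auto

lemma sum_list_filter_upt: "(\<Sum>h\<leftarrow>filter P [0..<n]. f h) = (\<Sum>h | h < n \<and> P h. f h)"
proof -
  have "set (filter P [0..<n]) = {h. h < n \<and> P h}" by auto
  then show ?thesis by (metis distinct_filter distinct_upt sum_list_distinct_conv_sum_set)
qed

lemma sum_even_odd_split:
  fixes n :: nat
  shows "(\<Sum>h | h < n \<and> even h. f h) + (\<Sum>h | h < n \<and> odd h. f h) = (\<Sum>h<n. f h)"
proof -
  have "sum f ({h. h < n \<and> even h} \<union> {h. h < n \<and> odd h})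
      = (\<Sum>h | h < n \<and> even h. f h) + (\<Sum>h | h < n \<and> odd h. f h)"
    by (rule sum.union_disjoint) (simp_all add: finite_Collect_conjI disjoint_iff)
  moreover have "{h. h < n \<and> even h} \<union> {h. h < n \<and> odd h} = {..<n}" by auto
  ultimately show ?thesis by simp
qed

lemma splice_additive:
  fixes \<mu> :: "'e list \<Rightarrow> nat"
  assumes \<mu>_append: "\<And>xs ys. \<mu> (xs @ ys) = \<mu> xs + \<mu> ys"
    and "\<forall>p\<in>set sel. fst p < snd p \<and> snd p \<le> Suc (mT AT P)"
    and "sorted_wrt (\<lambda>p p'. snd p \<le> fst p') sel"
    and "sel \<noteq> [] \<longrightarrow> st \<le> seg_end AT P (fst (hd sel))" and "st \<le> length P"
  shows "\<mu> (splice AT P ups st sel) + (\<Sum>p\<leftarrow>sel. \<mu> (subpath AT P (fst p) (snd p))) + \<mu> (take st P)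
    = \<mu> P + (\<Sum>p\<leftarrow>sel. \<mu> (ups (fst p) (snd p)))"
  using assms(2-)
proof (induction sel arbitrary: st)
  case Nil
  then show ?case using \<mu>_append[of "take st P" "drop st P"] by simp
next
  case (Cons p sel)
  obtain i j where p: "p = (i, j)" by fastforce
  define e where "e = seg_end AT P i"
  define b where "b = seg_start AT P j"
  have ij: "i < j" "j \<le> Suc (mT AT P)" using Cons.prems(1) p by simp_all
  have "st \<le> e" and "e \<le> length P"
    using Cons.prems(3) seg_end_le_length[of i AT P] ij by (simp_all add: p e_def)
  then have take_e: "\<mu> (take e P) = \<mu> (take st P) + \<mu> (drop st (take e P))"
    using \<mu>_append take_eq_take_append_drop_take by metis
  have take_b: "\<mu> (take b P) = \<mu> (take e P) + \<mu> (subpath AT P i j)"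
    using take_seg_start_eq[OF ij] \<mu>_append by (simp add: e_def b_def)
  have "sel \<noteq> [] \<longrightarrow> b \<le> seg_end AT P (fst (hd sel))"
  proof
    assume "sel \<noteq> []"
    then have "hd sel \<in> set sel" by simp
    then have "j \<le> fst (hd sel)" and "fst (hd sel) \<le> mT AT P"
      using Cons.prems(1,2) p by fastforce+
    then show "b \<le> seg_end AT P (fst (hd sel))"
      using ij by (simp add: b_def seg_start_le_seg_end)
  qed
  then have IH: "\<mu> (splice AT P ups b sel) + (\<Sum>p\<leftarrow>sel. \<mu> (subpath AT P (fst p) (snd p))) + \<mu> (take b P)
      = \<mu> P + (\<Sum>p\<leftarrow>sel. \<mu> (ups (fst p) (snd p)))"
    using Cons ij seg_start_le_length[of j AT P] by (simp add: b_def)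
  show ?case
    using IH take_e take_b \<mu>_append by (simp add: p e_def[symmetric] b_def[symmetric])
qed

lemma sum_intervals_telescope:
  fixes f :: "nat \<Rightarrow> 'a::comm_monoid_add"
  assumes "\<And>h. h < k \<Longrightarrow> b h \<le> b (Suc h)"
  shows "(\<Sum>h<k. \<Sum>x\<in>{b h<..b (Suc h)}. f x) = (\<Sum>x\<in>{b 0<..b k}. f x)"
  using assms
proof (induction k)
  case (Suc k)
  have "b 0 \<le> b k" using Suc.prems by (rule lift_Suc_mono_le_ivl[of "{..<k}"]) auto
  then have "{b 0<..b (Suc k)} = {b 0<..b k} \<union> {b k<..b (Suc k)}"
    using Suc.prems by (simp add: ivl_disj_un_two(6))
  then show ?case using Suc by (simp add: sum.union_disjoint)
qed simp

section \<open>The MaxRev loop\<close>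

lemma ereal_diff_diff_eq_iff:
  fixes u a b x :: ereal
  assumes "\<bar>a\<bar> \<noteq> \<infinity>" and "\<bar>b\<bar> \<noteq> \<infinity>" and "\<bar>x\<bar> \<noteq> \<infinity>"
  shows "u - a - b = x \<longleftrightarrow> u = a + (b + x)"
  using assms by (cases u; cases a; cases b; cases x) auto

lemma ereal_le_diff_diff_iff:
  fixes u a b x :: ereal
  assumes "\<bar>a\<bar> \<noteq> \<infinity>" and "\<bar>b\<bar> \<noteq> \<infinity>"
  shows "x \<le> u - a - b \<longleftrightarrow> a + (b + x) \<le> u"
  using assms by (cases u; cases a; cases b; cases x) auto

lemma sum_nonneg_finite_ereal:
  fixes f :: "'a \<Rightarrow> ereal"
  assumes "\<And>x. 0 \<le> f x \<and> f x \<noteq> \<infinity>"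
  shows "\<bar>sum f A\<bar> \<noteq> \<infinity>"
  using assms sum_nonneg[of A f] by (auto simp: sum_Pinfty)

lemma lex_max_min_in:
  fixes B :: "('a::linorder \<times> 'b::linorder) set"
  assumes "finite B" and "B \<noteq> {}"
  shows "(Min {i. (i, Max (snd ` B)) \<in> B}, Max (snd ` B)) \<in> B"
proof -
  have "Max (snd ` B) \<in> snd ` B" using assms by simp
  then have "{i. (i, Max (snd ` B)) \<in> B} \<noteq> {}" by force
  moreover have "finite {i. (i, Max (snd ` B)) \<in> B}"
    using finite_imageI[OF assms(1), of fst] by (rule finite_subset[rotated]) force
  ultimately show ?thesis using Min_in by blast
qed

definition maxrev_admissible :: "nat \<Rightarrow> (nat \<Rightarrow> nat \<Rightarrow> ereal) \<Rightarrow> (nat \<Rightarrow> nat \<Rightarrow> ereal) \<Rightarrow> bool" where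
  "maxrev_admissible m U L \<longleftrightarrow>
     (\<forall>i j. i < j \<and> j \<le> Suc m \<longrightarrow> \<bar>L i j\<bar> \<noteq> \<infinity> \<and> L i j \<le> U i j) \<and> U 0 (Suc m) \<noteq> \<infinity>"

text \<open>Here \<open>tt l\<close> is \<open>t\<^sub>l\<close> and \<open>pr l\<close> is the pair \<open>(i'(l), j'(l))\<close> of MaxRev.\<close>

definition maxrev_block ::
  "(nat \<Rightarrow> nat \<Rightarrow> ereal) \<Rightarrow> (nat \<Rightarrow> nat \<Rightarrow> ereal) \<Rightarrow> (nat \<Rightarrow> ereal) \<Rightarrow> (nat \<Rightarrow> nat \<times> nat) \<Rightarrow> nat \<Rightarrow> bool"
where
  "maxrev_block U L tt pr l \<longleftrightarrow>
     fst (pr l) < l \<and> l < snd (pr l) \<and>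
     U (fst (pr l)) (snd (pr l)) = L (fst (pr l)) (snd (pr l)) + (\<Sum>x\<in>{Suc (fst (pr l))..<snd (pr l)}. tt x) \<and>
     (\<forall>x. l < x \<and> x < snd (pr l) \<longrightarrow> tt x = 0) \<and>
     (\<forall>l'. l \<le> l' \<and> l' < snd (pr l) \<longrightarrow> pr l' = pr l)"

text \<open>The last conjunct is what makes the minimum \<open>t\<^sub>k\<close> chosen in the next round
  nonnegative.\<close>

definition maxrev_inv ::
  "nat \<Rightarrow> (nat \<Rightarrow> nat \<Rightarrow> ereal) \<Rightarrow> (nat \<Rightarrow> nat \<Rightarrow> ereal) \<Rightarrow> nat \<Rightarrow> (nat \<Rightarrow> ereal) \<Rightarrow> (nat \<Rightarrow> nat \<times> nat) \<Rightarrow> bool"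
where
  "maxrev_inv m U L k tt pr \<longleftrightarrow> 0 < k \<and> k \<le> Suc m \<and>
     (\<forall>x. 0 \<le> tt x \<and> tt x \<noteq> \<infinity>) \<and> (\<forall>x. k \<le> x \<longrightarrow> tt x = 0) \<and>
     (\<forall>l. 0 < l \<and> l < k \<longrightarrow> maxrev_block U L tt pr l \<and> snd (pr l) \<le> k) \<and>
     (\<forall>i j. i < k \<and> k < j \<and> j \<le> Suc m \<longrightarrow> L i j + (\<Sum>x\<in>{Suc i..<k}. tt x) \<le> U i j)"

lemma maxrev_blockD:
  assumes "maxrev_block U L tt pr l"
  shows "fst (pr l) < l" and "l < snd (pr l)"
    and "U (fst (pr l)) (snd (pr l)) = L (fst (pr l)) (snd (pr l)) + (\<Sum>x\<in>{Suc (fst (pr l))..<snd (pr l)}. tt x)"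
    and "l < x \<Longrightarrow> x < snd (pr l) \<Longrightarrow> tt x = 0"
    and "l \<le> l' \<Longrightarrow> l' < snd (pr l) \<Longrightarrow> pr l' = pr l"
  using assms unfolding maxrev_block_def by blast+

lemma maxrev_block_cong:
  assumes block: "maxrev_block U L tt pr l"
    and tt': "\<And>x. fst (pr l) < x \<Longrightarrow> x < snd (pr l) \<Longrightarrow> tt' x = tt x"
    and pr': "\<And>l'. l \<le> l' \<Longrightarrow> l' < snd (pr l) \<Longrightarrow> pr' l' = pr l'"
  shows "maxrev_block U L tt' pr' l"
proof -
  note lt = maxrev_blockD(1,2)[OF block]
  then have pr'_l: "pr' l = pr l" using pr' by simp
  have "(\<Sum>x\<in>{Suc (fst (pr l))..<snd (pr l)}. tt' x) = (\<Sum>x\<in>{Suc (fst (pr l))..<snd (pr l)}. tt x)"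
    using tt' by (intro sum.cong) auto
  moreover have "tt' x = 0" if "l < x" "x < snd (pr l)" for x
    using tt'[of x] maxrev_blockD(4)[OF block that] that lt by simp
  moreover have "pr' l' = pr l" if "l \<le> l'" "l' < snd (pr l)" for l'
    using pr'[OF that] maxrev_blockD(5)[OF block that] by simp
  ultimately show ?thesis
    using lt maxrev_blockD(3)[OF block] unfolding maxrev_block_def pr'_l by simp
qed

lemma maxrev_min_finite:
  assumes adm: "maxrev_admissible m U L" and inv: "maxrev_inv m U L k tt pr" and "k < Suc m"
    and "ib < k" and "k < jb" and "jb \<le> Suc m"
    and val_best: "U ib jb - L ib jb - (\<Sum>x\<in>{Suc ib..<k}. tt x) = mn"
    and val_min: "mn \<le> U 0 (Suc m) - L 0 (Suc m) - (\<Sum>x\<in>{Suc 0..<k}. tt x)"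
  shows "0 \<le> mn" and "mn \<noteq> \<infinity>"
proof -
  have tt: "\<And>x. 0 \<le> tt x \<and> tt x \<noteq> \<infinity>" using inv by (simp add: maxrev_inv_def)
  have "\<bar>L ib jb\<bar> \<noteq> \<infinity>" using adm assms(4-6) by (simp add: maxrev_admissible_def)
  moreover have "L ib jb + (\<Sum>x\<in>{Suc ib..<k}. tt x) \<le> U ib jb"
    using inv assms(4-6) by (simp add: maxrev_inv_def)
  ultimately have "0 \<le> U ib jb - L ib jb - (\<Sum>x\<in>{Suc ib..<k}. tt x)"
    using ereal_le_diff_diff_iff[OF _ sum_nonneg_finite_ereal[of tt, OF tt], of _ 0] by simp
  then show "0 \<le> mn" using val_best by simp
  have "\<bar>L 0 (Suc m)\<bar> \<noteq> \<infinity>" and "U 0 (Suc m) \<noteq> \<infinity>"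
    using adm by (simp_all add: maxrev_admissible_def)
  then show "mn \<noteq> \<infinity>"
    using val_min sum_nonneg_finite_ereal[of tt "{Suc 0..<k}", OF tt]
    by (cases "U 0 (Suc m)"; cases "L 0 (Suc m)"; cases "\<Sum>x\<in>{Suc 0..<k}. tt x") auto
qed

lemma sum_maxrev_update:
  fixes f :: "nat \<Rightarrow> 'a::comm_monoid_add"
  assumes "i < k" and "k < jb"
  shows "(\<Sum>x\<in>{Suc i..<jb}. if x = k then a else if k < x \<and> x < jb then 0 else f x)
    = (\<Sum>x\<in>{Suc i..<k}. f x) + a"
proof -
  have "{Suc i..<jb} = {Suc i..<k} \<union> {k} \<union> {Suc k..<jb}" using assms by auto
  moreover have "(\<Sum>x\<in>{Suc k..<jb}. if x = k then a else if k < x \<and> x < jb then 0 else f x) = 0"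
    by (intro sum.neutral) auto
  ultimately show ?thesis by (simp add: sum.union_disjoint add.commute)
qed

lemma maxrev_inv_update:
  assumes adm: "maxrev_admissible m U L" and inv: "maxrev_inv m U L k tt pr"
    and ij: "ib < k" "k < jb" "jb \<le> Suc m" and mn: "0 \<le> mn" "mn \<noteq> \<infinity>"
    and val_best: "U ib jb - L ib jb - (\<Sum>x\<in>{Suc ib..<k}. tt x) = mn"
    and val_min: "\<And>i j. i < k \<Longrightarrow> k < j \<Longrightarrow> j \<le> Suc m \<Longrightarrow>
      mn \<le> U i j - L i j - (\<Sum>x\<in>{Suc i..<k}. tt x)"
  defines "tt' \<equiv> \<lambda>l. if l = k then mn else if k < l \<and> l < jb then 0 else tt l"
    and "pr' \<equiv> \<lambda>l. if k \<le> l \<and> l < jb then (ib, jb) else pr l"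
  shows "maxrev_inv m U L jb tt' pr'"
proof -
  have tt: "\<And>x. 0 \<le> tt x \<and> tt x \<noteq> \<infinity>" and "\<And>x. k \<le> x \<Longrightarrow> tt x = 0"
    using inv by (simp_all add: maxrev_inv_def)
  then have tt': "\<And>x. 0 \<le> tt' x \<and> tt' x \<noteq> \<infinity>" and tt'_zero: "\<And>x. jb \<le> x \<Longrightarrow> tt' x = 0"
    using mn ij by (simp_all add: tt'_def)
  have L_fin: "\<And>i j. i < j \<Longrightarrow> j \<le> Suc m \<Longrightarrow> \<bar>L i j\<bar> \<noteq> \<infinity>"
    using adm by (simp add: maxrev_admissible_def)
  have S_fin: "\<And>A. \<bar>\<Sum>x\<in>A. tt x\<bar> \<noteq> \<infinity>" by (rule sum_nonneg_finite_ereal[of tt, OF tt])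
  have sum_upto: "(\<Sum>x\<in>{Suc i..<jb}. tt' x) = (\<Sum>x\<in>{Suc i..<k}. tt x) + mn" if "i < k" for i
    unfolding tt'_def using sum_maxrev_update[OF that ij(2)] .
  have old_blocks: "maxrev_block U L tt' pr' l \<and> snd (pr' l) \<le> jb" if "0 < l" "l < k" for l
  proof -
    have block: "maxrev_block U L tt pr l" and le_k: "snd (pr l) \<le> k"
      using inv that by (simp_all add: maxrev_inv_def)
    from block have "maxrev_block U L tt' pr' l"
      by (rule maxrev_block_cong) (use le_k in \<open>auto simp: tt'_def pr'_def\<close>)
    then show ?thesis using le_k that ij by (simp add: pr'_def)
  qed
  have "U ib jb = L ib jb + ((\<Sum>x\<in>{Suc ib..<k}. tt x) + mn)"
    using val_best ereal_diff_diff_eq_iff[OF L_fin S_fin] ij mn by simp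
  then have new_blocks: "maxrev_block U L tt' pr' l \<and> snd (pr' l) \<le> jb" if "k \<le> l" "l < jb" for l
    using that ij sum_upto[OF ij(1)] unfolding maxrev_block_def pr'_def by (simp add: tt'_def)
  have feasible: "L i j + (\<Sum>x\<in>{Suc i..<jb}. tt' x) \<le> U i j"
    if "i < jb" "jb < j" "j \<le> Suc m" for i j
  proof (cases "i < k")
    case True
    then show ?thesis
      using val_min[of i j] that ij ereal_le_diff_diff_iff[OF L_fin S_fin] by (simp add: sum_upto)
  next
    case False
    then have "(\<Sum>x\<in>{Suc i..<jb}. tt' x) = 0" by (intro sum.neutral) (auto simp: tt'_def)
    then show ?thesis using adm that by (simp add: maxrev_admissible_def)
  qed
  have "maxrev_block U L tt' pr' l \<and> snd (pr' l) \<le> jb" if "0 < l" "l < jb" for l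
    using old_blocks new_blocks that by (cases "l < k") simp_all
  then show ?thesis
    unfolding maxrev_inv_def using tt' tt'_zero feasible ij by simp
qed

lemma maxrev_loop_step:
  assumes adm: "maxrev_admissible m U L" and inv: "maxrev_inv m U L k tt pr" and "k < Suc m"
  shows "\<exists>jb tt' pr'. maxrev_loop (Suc f) m U L k tt pr = maxrev_loop f m U L jb tt' pr'
    \<and> k < jb \<and> maxrev_inv m U L jb tt' pr'"
proof -
  define val where "val = (\<lambda>ij. U (fst ij) (snd ij) - L (fst ij) (snd ij) - (\<Sum>l\<in>{Suc (fst ij)..<k}. tt l))"
  define S where "S = {ij. fst ij < k \<and> k < snd ij \<and> snd ij \<le> Suc m}"
  define mn where "mn = Min (val ` S)"
  define best where "best = {ij \<in> S. val ij = mn}"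
  define jb where "jb = Max (snd ` best)"
  define ib where "ib = Min {i. (i, jb) \<in> best}"
  have "finite S" by (rule finite_subset[of _ "{..<k} \<times> {..Suc m}"]) (auto simp: S_def)
  moreover have "(0, Suc m) \<in> S" using inv \<open>k < Suc m\<close> by (simp add: S_def maxrev_inv_def)
  ultimately have "mn \<in> val ` S" and mn_le: "\<And>ij. ij \<in> S \<Longrightarrow> mn \<le> val ij"
    by (auto simp: mn_def intro!: Min_in)
  then have "(ib, jb) \<in> best"
    unfolding ib_def jb_def using \<open>finite S\<close> by (intro lex_max_min_in) (auto simp: best_def)
  then have ij: "ib < k" "k < jb" "jb \<le> Suc m" and val_best: "val (ib, jb) = mn"
    by (simp_all add: best_def S_def)
  have mn_fin: "0 \<le> mn" "mn \<noteq> \<infinity>"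
    using maxrev_min_finite[OF adm inv \<open>k < Suc m\<close> ij] val_best mn_le[OF \<open>(0, Suc m) \<in> S\<close>]
    by (simp_all add: val_def)
  define tt' where "tt' = (\<lambda>l. if l = k then mn else if k < l \<and> l < jb then 0 else tt l)"
  define pr' where "pr' = (\<lambda>l. if k \<le> l \<and> l < jb then (ib, jb) else pr l)"
  have "maxrev_inv m U L jb tt' pr'"
    unfolding tt'_def pr'_def
  proof (rule maxrev_inv_update[OF adm inv ij mn_fin])
    show "U ib jb - L ib jb - (\<Sum>x\<in>{Suc ib..<k}. tt x) = mn" using val_best by (simp add: val_def)
    show "mn \<le> U i j - L i j - (\<Sum>x\<in>{Suc i..<k}. tt x)" if "i < k" "k < j" "j \<le> Suc m" for i j
      using mn_le[of "(i, j)"] that by (simp add: val_def S_def)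
  qed
  moreover have "maxrev_loop (Suc f) m U L k tt pr = maxrev_loop f m U L jb tt' pr'"
    using \<open>k < Suc m\<close> unfolding val_def S_def mn_def best_def jb_def ib_def tt'_def pr'_def
    by (simp add: Let_def)
  ultimately show ?thesis using ij by blast
qed

lemma maxrev_loop_inv:
  assumes "maxrev_admissible m U L"
  shows "maxrev_inv m U L k tt pr \<Longrightarrow> Suc m \<le> f + k \<Longrightarrow>
    maxrev_inv m U L (Suc m) (fst (maxrev_loop f m U L k tt pr)) (snd (maxrev_loop f m U L k tt pr))"
proof (induction f arbitrary: k tt pr)
  case 0
  then have "k = Suc m" by (simp add: maxrev_inv_def)
  with 0 show ?case by simp
next
  case (Suc f)
  show ?case
  proof (cases "k < Suc m")
    case True
    then obtain jb tt' pr' where "maxrev_loop (Suc f) m U L k tt pr = maxrev_loop f m U L jb tt' pr'"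
      and "k < jb" and "maxrev_inv m U L jb tt' pr'"
      using maxrev_loop_step[OF assms Suc.prems(1)] by blast
    then show ?thesis using Suc.IH Suc.prems(2) by simp
  next
    case False
    then have "k = Suc m" using Suc.prems(1) by (simp add: maxrev_inv_def)
    with Suc.prems(1) show ?thesis by simp
  qed
qed

lemma maxrev_loop_inv_initial:
  assumes "maxrev_admissible m U L"
  shows "maxrev_inv m U L (Suc m) (fst (maxrev_loop (Suc m) m U L 1 (\<lambda>_. 0) (\<lambda>_. (0, 0))))
    (snd (maxrev_loop (Suc m) m U L 1 (\<lambda>_. 0) (\<lambda>_. (0, 0))))"
  using assms by (intro maxrev_loop_inv) (auto simp: maxrev_inv_def maxrev_admissible_def)



section \<open>The pairs recorded by TollPartition\<close>

lemma record_pairs_0 [simp]: "record_pairs f pr 0 = []"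
  by (cases f) simp_all

lemma record_pairs_chain:
  assumes "\<And>l'. 0 < l' \<Longrightarrow> l' \<le> l \<Longrightarrow> fst (pr l') < l'" and "0 < l" and "l \<le> f"
  shows "\<exists>b q. rev (record_pairs f pr l) = map (\<lambda>h. pr (b (Suc h))) [0..<q] \<and> b 0 = 0 \<and> b q = l \<and>
    (\<forall>h<q. b h < b (Suc h) \<and> fst (pr (b (Suc h))) = b h)"
  using assms
proof (induction f arbitrary: l)
  case (Suc f)
  define i where "i = fst (pr l)"
  have "i < l" using Suc.prems by (simp add: i_def)
  have rec: "record_pairs (Suc f) pr l = pr l # record_pairs f pr i"
    using Suc.prems by (simp add: i_def)
  show ?case
  proof (cases "i = 0")
    case True
    then show ?thesis
      by (intro exI[of _ "\<lambda>h. if h = 0 then 0 else l"] exI[of _ 1]) (simp add: rec i_def \<open>0 < l\<close>)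
  next
    case False
    then obtain b q where IH: "rev (record_pairs f pr i) = map (\<lambda>h. pr (b (Suc h))) [0..<q]"
      "b 0 = 0" "b q = i" "\<forall>h<q. b h < b (Suc h) \<and> fst (pr (b (Suc h))) = b h"
      using Suc.IH[of i] Suc.prems \<open>i < l\<close> by fastforce
    have "map (\<lambda>h. pr ((b(Suc q := l)) (Suc h))) [0..<q] = map (\<lambda>h. pr (b (Suc h))) [0..<q]"
      by (intro map_cong) auto
    then have "rev (record_pairs (Suc f) pr l) = map (\<lambda>h. pr ((b(Suc q := l)) (Suc h))) [0..<Suc q]"
      using IH(1) by (simp only: rec rev.simps upt_Suc_append[OF le0] map_append) simp
    moreover have "\<forall>h<Suc q. (b(Suc q := l)) h < (b(Suc q := l)) (Suc h) \<and>
        fst (pr ((b(Suc q := l)) (Suc h))) = (b(Suc q := l)) h"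
      using IH(3,4) \<open>i < l\<close> by (auto simp: less_Suc_eq i_def)
    ultimately show ?thesis
      using IH(2) by (intro exI[of _ "b(Suc q := l)"] exI[of _ "Suc q"]) simp
  qed
qed simp

section \<open>The function \<open>alpha\<close>\<close>

declare alpha.simps [simp del]

lemma alpha_le_1: "k \<le> 1 \<Longrightarrow> alpha k = 1"
  by (subst alpha.simps) simp

lemma alpha_pair_le:
  assumes "2 \<le> k" "0 < i" "i \<le> j" "j < k" "i + j \<le> k"
  shows "1 + alpha i + alpha j \<le> 2 * alpha k"
proof -
  let ?S = "{ij::nat \<times> nat. 0 < fst ij \<and> fst ij \<le> snd ij \<and> snd ij < k \<and> fst ij + snd ij \<le> k}"
  have "finite ?S" by (rule finite_subset[of _ "{..<k} \<times> {..<k}"]) auto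
  moreover have "(i, j) \<in> ?S" using assms by simp
  ultimately have "1 + alpha i + alpha j \<le> Max ((\<lambda>ij. 1 + alpha (fst ij) + alpha (snd ij)) ` ?S)"
    by (intro Max_ge) (auto intro!: image_eqI[of _ _ "(i, j)"])
  moreover have "alpha k = (1/2) * Max ((\<lambda>ij. 1 + alpha (fst ij) + alpha (snd ij)) ` ?S)"
    using assms by (subst alpha.simps) simp
  ultimately show ?thesis by simp
qed

lemma alpha_ge_1: "1 \<le> alpha k"
proof (induction k rule: less_induct)
  case (less k)
  show ?case
  proof (cases "k \<le> 1")
    case False
    then have "1 + alpha 1 + alpha 1 \<le> 2 * alpha k" by (intro alpha_pair_le) auto
    then show ?thesis by (simp add: alpha_le_1)
  qed (simp add: alpha_le_1)
qed

text \<open>\<open>a = 0\<close> and \<open>b = 0\<close> are allowed because \<open>alpha 0 = 1 = alpha 1\<close>.\<close>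

lemma alpha_sum_le:
  assumes "2 \<le> k" "a < k" "b < k" "a + b \<le> k"
  shows "1 + alpha a + alpha b \<le> 2 * alpha k"
proof -
  have "alpha (max 1 n) = alpha n" for n by (cases "n = 0") (simp_all add: alpha_le_1)
  moreover have "1 + alpha (min a' b') + alpha (max a' b') \<le> 2 * alpha k"
    if "a' = max 1 a" "b' = max 1 b" for a' b'
    using assms that by (intro alpha_pair_le) auto
  ultimately show ?thesis by (metis add.assoc add.commute max_def min_def)
qed

lemma ratio_split_bound:
  fixes a a1 a2 B B1 B2 D1 D2 :: real
  assumes "1 \<le> a1" "1 \<le> a2" "1 + a1 + a2 \<le> 2 * a"
    and "B - D1 \<le> B1" "B - D2 \<le> B2" "0 \<le> D1 + D2" "D1 + D2 < B / a"
  shows "B / a \<le> B1 / a1 \<or> B / a \<le> B2 / a2"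
proof (rule ccontr)
  define K where "K = B / a"
  assume "\<not> ?thesis"
  then have "B1 < a1 * K" and "B2 < a2 * K"
    using assms(1,2) by (simp_all add: K_def field_simps)
  moreover have "0 < K" and "a * K = B" using assms(1-3,6,7) by (simp_all add: K_def)
  moreover have "(a1 + a2) * K \<le> (2 * a - 1) * K"
    using assms(3) \<open>0 < K\<close> by (intro mult_right_mono) auto
  ultimately show False using assms(4-7) by (simp add: K_def[symmetric] algebra_simps)
qed

section \<open>Valid paths\<close>

lemma dist_tf_le_plen: "walk ini ter AU u p v \<Longrightarrow> dist_tf AT ini ter AU c d u v \<le> ereal (plen AT c d p)"
  unfolding dist_tf_def by (rule INF_lower) simp

lemma dist_tf_nonneg: "0 \<le> dist_tf AT ini ter AU c d u v"
  unfolding dist_tf_def by (rule INF_greatest) simp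

lemma LL_nonneg: "0 \<le> LL AT AU ini ter c d s t P i j"
  unfolding LL_def UU_def by (intro add_nonneg_nonneg sum_nonneg dist_tf_nonneg) simp

lemma LL_Suc:
  assumes "i < j"
  shows "LL AT AU ini ter c d s t P i (Suc j) =
    LL AT AU ini ter c d s t P i j + UU AT AU ini ter c d s t P j (Suc j) + ereal (c (tau AT P j))"
  using assms unfolding LL_def by (simp only: sum.atLeastLessThan_Suc less_imp_le_nat Suc_le_eq ac_simps)

locale toll_path =
  fixes AT AU :: "'e set" and ini ter :: "'e \<Rightarrow> 'v" and c d :: "'e \<Rightarrow> nat"
    and s t :: 'v and P :: "'e list"
  assumes tolls_disjoint: "AT \<inter> AU = {}"
    and walk_P: "walk ini ter (AT \<union> AU) s P t"
begin

abbreviation m :: nat where "m \<equiv> mT AT P"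
abbreviation U :: "nat \<Rightarrow> nat \<Rightarrow> ereal" where "U \<equiv> UU AT AU ini ter c d s t P"
abbreviation L :: "nat \<Rightarrow> nat \<Rightarrow> ereal" where "L \<equiv> LL AT AU ini ter c d s t P"

lemma walk_vertex_seg_end: "walk_vertex ter s P (seg_end AT P i) = TERMv AT ter s P i"
  by (simp add: walk_vertex_def seg_end_def TERMv_def tau_def)

lemma walk_vertex_seg_start:
  assumes "0 < j" and "j \<le> Suc m"
  shows "walk_vertex ter s P (seg_start AT P j) = INITv AT ini t P j"
proof (cases "j = Suc m")
  case True
  then show ?thesis using walk_vertex_length[OF walk_P] by (simp add: seg_start_def INITv_def)
next
  case False
  then show ?thesis
    using ini_nth_walk[OF walk_P, of "seg_start AT P j"] nth_seg_start[of j AT P] assms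
    by (simp add: INITv_def)
qed

lemma walk_subpath:
  assumes "i < j" and "j \<le> Suc m"
  shows "walk ini ter (AT \<union> AU) (TERMv AT ter s P i) (subpath AT P i j) (INITv AT ini t P j)"
  using walk_drop_take[OF walk_P seg_end_le_seg_start[of i j AT P] seg_start_le_length[of j AT P]] assms
  by (simp add: subpath_def walk_vertex_seg_end walk_vertex_seg_start)

lemma toll_free_subpath:
  assumes "i \<le> m"
  shows "walk ini ter AU (TERMv AT ter s P i) (subpath AT P i (Suc i)) (INITv AT ini t P (Suc i))"
proof -
  have "set (subpath AT P i (Suc i)) \<inter> AT = {}"
    using mT_subpath[of i "Suc i" AT P] assms by (simp add: mT_eq_0_iff)
  moreover have "set (subpath AT P i (Suc i)) \<subseteq> AT \<union> AU"
    using walk_subset[OF walk_subpath] assms by simp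
  ultimately show ?thesis
    using walk_mono[OF walk_subpath] assms by blast
qed

lemma LL_le_plen_subpath: "i < j \<Longrightarrow> j \<le> Suc m \<Longrightarrow> L i j \<le> ereal (plen AT c d (subpath AT P i j))"
proof (induction j)
  case (Suc j)
  have U_le: "U j (Suc j) \<le> ereal (plen AT c d (subpath AT P j (Suc j)))"
    unfolding UU_def using Suc.prems by (intro dist_tf_le_plen toll_free_subpath) simp
  show ?case
  proof (cases "i = j")
    case True
    then show ?thesis using U_le by (simp add: LL_def)
  next
    case False
    then have "i < j" and "0 < j" and "j \<le> m" using Suc.prems by simp_all
    moreover have "L i j \<le> ereal (plen AT c d (subpath AT P i j))" using Suc \<open>i < j\<close> by simp
    ultimately have "L i (Suc j) \<le> ereal (plen AT c d (subpath AT P i j))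
        + ereal (plen AT c d (subpath AT P j (Suc j))) + ereal (c (tau AT P j))"
      unfolding LL_Suc[OF \<open>i < j\<close>] using U_le by (intro add_mono order.refl)
    then show ?thesis
      using tau_in_tolls[of j AT P] \<open>i < j\<close> \<open>j \<le> m\<close> by (simp add: subpath_Suc ac_simps)
  qed
qed simp

lemma LL_finite: "i < j \<Longrightarrow> j \<le> Suc m \<Longrightarrow> \<bar>L i j\<bar> \<noteq> \<infinity>"
  using LL_le_plen_subpath[of i j] LL_nonneg[of AT AU ini ter c d s t P i j] by auto

lemma walk_detour:
  assumes "i < j" and "j \<le> Suc m"
    and "walk ini ter AU (TERMv AT ter s P i) p (INITv AT ini t P j)"
  shows "walk ini ter (AU \<union> (AT \<inter> set P)) s
    (take (seg_end AT P i) P @ p @ drop (seg_start AT P j) P) t"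
proof -
  have "walk ini ter (AT \<union> AU) s (take (seg_end AT P i) P) (TERMv AT ter s P i)"
    using walk_take_drop(1)[OF walk_P seg_end_le_length[of i AT P]] assms(1,2)
    by (simp add: walk_vertex_seg_end)
  then have "walk ini ter (AU \<union> (AT \<inter> set P)) s (take (seg_end AT P i) P) (TERMv AT ter s P i)"
    by (rule walk_restrict) (rule set_take_subset)
  moreover have "walk ini ter (AT \<union> AU) (INITv AT ini t P j) (drop (seg_start AT P j) P) t"
    using walk_take_drop(2)[OF walk_P seg_start_le_length[of j AT P]] assms(1,2)
    by (simp add: walk_vertex_seg_start)
  then have "walk ini ter (AU \<union> (AT \<inter> set P)) (INITv AT ini t P j) (drop (seg_start AT P j) P) t"
    by (rule walk_restrict) (rule set_drop_subset)
  moreover have "walk ini ter (AU \<union> (AT \<inter> set P)) (TERMv AT ter s P i) p (INITv AT ini t P j)"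
    using walk_subset[OF assms(3)] by (intro walk_mono[OF assms(3)]) blast
  ultimately show ?thesis unfolding walk_append by blast
qed

end

locale valid_toll_path = toll_path AT AU ini ter c d s t P
  for AT AU :: "'e set" and ini ter :: "'e \<Rightarrow> 'v" and c d :: "'e \<Rightarrow> nat"
    and s t :: 'v and P :: "'e list" +
  fixes ups :: "nat \<Rightarrow> nat \<Rightarrow> 'e list"
  assumes valid_P: "valid AT AU ini ter c d s t P"
    and ups_choice: "upsilon_choice AT AU ini ter c d s t P ups"
    and toll_free_st: "\<exists>p. walk ini ter AU s p t"
begin

lemma plen_subpath_le_UU:
  assumes "i < j" and "j \<le> Suc m"
  shows "ereal (plen AT c d (subpath AT P i j)) \<le> U i j"
proof (cases "U i j = \<infinity>")
  case False
  then have ups_walk: "walk ini ter AU (TERMv AT ter s P i) (ups i j) (INITv AT ini t P j)"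
    and ups_len: "ereal (plen AT c d (ups i j)) = U i j"
    using ups_choice assms by (auto simp: upsilon_choice_def less_top)
  define pre where "pre = take (seg_end AT P i) P"
  define post where "post = drop (seg_start AT P j) P"
  have "P = pre @ subpath AT P i j @ post"
    using append_take_drop_id[of "seg_start AT P j" P] take_seg_start_eq[OF assms]
    by (simp add: pre_def post_def)
  then have "plen AT c d P = plen AT c d pre + plen AT c d (subpath AT P i j) + plen AT c d post"
    by (metis plen_append add.assoc)
  moreover have "plen AT c d P \<le> plen AT c d (pre @ ups i j @ post)"
    using walk_detour[OF assms ups_walk] valid_P unfolding valid_def pre_def post_def by blast
  ultimately have "plen AT c d (subpath AT P i j) \<le> plen AT c d (ups i j)" by simp
  then show ?thesis unfolding ups_len[symmetric] by simp
qed simp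

lemma ups_detour_bound:
  fixes \<delta> :: real
  assumes "i < j" and "j \<le> Suc m" and U_eq: "U i j = L i j + ereal \<delta>"
  shows "mT AT (ups i j) = 0" and "plen AT c d (ups i j) \<le> plen AT c d (subpath AT P i j) + \<delta>"
proof -
  have L_le: "L i j \<le> ereal (plen AT c d (subpath AT P i j))"
    using LL_le_plen_subpath[OF assms(1,2)] .
  then have "U i j < \<infinity>" using U_eq by (cases "L i j") auto
  then have ups_walk: "walk ini ter AU (TERMv AT ter s P i) (ups i j) (INITv AT ini t P j)"
    and ups_len: "ereal (plen AT c d (ups i j)) = U i j"
    using ups_choice assms(1,2) by (auto simp: upsilon_choice_def)
  show "mT AT (ups i j) = 0"
    using walk_subset[OF ups_walk] tolls_disjoint by (auto simp: mT_eq_0_iff)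
  have "ereal (plen AT c d (ups i j)) \<le> ereal (plen AT c d (subpath AT P i j)) + ereal \<delta>"
    unfolding ups_len U_eq by (rule add_right_mono[OF L_le])
  then show "plen AT c d (ups i j) \<le> plen AT c d (subpath AT P i j) + \<delta>" by simp
qed

lemma maxrev_admissible_UU_LL: "maxrev_admissible m U L"
proof -
  obtain p where "walk ini ter AU s p t" using toll_free_st by blast
  then have "U 0 (Suc m) \<noteq> \<infinity>"
    using dist_tf_le_plen[of ini ter AU s p t AT c d] by (auto simp: UU_def TERMv_def INITv_def)
  moreover have "L i j \<le> U i j" if "i < j" "j \<le> Suc m" for i j
    using LL_le_plen_subpath[OF that] plen_subpath_le_UU[OF that] by (rule order_trans)
  ultimately show ?thesis using LL_finite by (simp add: maxrev_admissible_def)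
qed

abbreviation tolls :: "nat \<Rightarrow> ereal" where "tolls \<equiv> fst (maxrev AT AU ini ter c d s t P)"
abbreviation pairs :: "nat \<Rightarrow> nat \<times> nat" where "pairs \<equiv> snd (maxrev AT AU ini ter c d s t P)"
abbreviation parts :: "(nat \<times> nat) list" where "parts \<equiv> partition_pairs AT AU ini ter c d s t P"
abbreviation q :: nat where "q \<equiv> length parts"

lemma maxrev_inv_result: "maxrev_inv m U L (Suc m) tolls pairs"
  using maxrev_loop_inv_initial[OF maxrev_admissible_UU_LL] by (simp add: maxrev_def)

definition toll :: "nat \<Rightarrow> real" where "toll x = real_of_ereal (tolls x)"

lemma tolls_eq: "tolls x = ereal (toll x)" and toll_nonneg: "0 \<le> toll x"
  using maxrev_inv_result by (auto simp: maxrev_inv_def toll_def ereal_real real_of_ereal_pos)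

text \<open>\<open>parts ! h = (part_i h, part_j h)\<close> is the pair \<open>(i(h+1), j(h+1))\<close> of the paper.  The
  sentinel \<open>part_i q = m\<close> makes \<open>part_i (Suc h)\<close> the index \<open>l\<close> whose pair
  \<open>(i'(l), j'(l))\<close> is recorded as \<open>parts ! h\<close>.\<close>

definition part_i :: "nat \<Rightarrow> nat" where "part_i h = (if h < q then fst (parts ! h) else m)"
definition part_j :: "nat \<Rightarrow> nat" where "part_j h = snd (parts ! h)"

lemma partition_chain:
  shows "0 < q" and "part_i 0 = 0" and "part_i q = m"
    and "h < q \<Longrightarrow> part_i h < part_i (Suc h)"
    and "h < q \<Longrightarrow> parts ! h = pairs (part_i (Suc h))"
proof -
  have "fst (pairs l) < l" if "0 < l" "l \<le> m" for l
  proof -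
    have "maxrev_block U L tolls pairs l" using maxrev_inv_result that by (simp add: maxrev_inv_def)
    then show ?thesis by (rule maxrev_blockD(1))
  qed
  moreover have "0 < m" using valid_P by (simp add: valid_def)
  ultimately obtain b k where parts: "parts = map (\<lambda>h. pairs (b (Suc h))) [0..<k]"
    and b: "b 0 = 0" "b k = m" "\<And>h. h < k \<Longrightarrow> b h < b (Suc h) \<and> fst (pairs (b (Suc h))) = b h"
    using record_pairs_chain[of m pairs "Suc m"] unfolding partition_pairs_def by auto
  have "q = k" by (subst parts) simp
  have nth_parts: "parts ! h = pairs (b (Suc h))" if "h < q" for h
    using that \<open>q = k\<close> by (subst parts) simp
  have part_i_b: "part_i h = b h" if "h \<le> q" for h
    using b that \<open>q = k\<close> nth_parts[of h] by (cases "h = q") (simp_all add: part_i_def)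
  show "0 < q" using b \<open>0 < m\<close> \<open>q = k\<close> by (cases q) auto
  show "part_i 0 = 0" using part_i_b b by simp
  show "part_i q = m" by (simp add: part_i_def)
  show "part_i h < part_i (Suc h)" if "h < q" using b(3) part_i_b that \<open>q = k\<close> by simp
  show "parts ! h = pairs (part_i (Suc h))" if "h < q" using nth_parts part_i_b that by simp
qed

lemma mono_part_i: "mono part_i"
proof (rule incseq_SucI)
  show "part_i n \<le> part_i (Suc n)" for n
    using partition_chain(4)[of n] by (cases "n < q") (simp_all add: part_i_def)
qed

lemma part_i_strict_mono: "h < h' \<Longrightarrow> h' \<le> q \<Longrightarrow> part_i h < part_i h'"
  using partition_chain(4) by (rule lift_Suc_mono_less_ivl[of "{..<q}"]) auto

definition part_revenue :: "nat \<Rightarrow> real" where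
  "part_revenue h = (\<Sum>x\<in>{Suc (part_i h)..<part_j h}. toll x)"

lemma partition_block:
  assumes "h < q"
  shows "part_i (Suc h) < part_j h" and "part_j h \<le> Suc m"
    and "U (part_i h) (part_j h) = L (part_i h) (part_j h) + ereal (part_revenue h)"
    and "\<And>x. part_i (Suc h) < x \<Longrightarrow> x < part_j h \<Longrightarrow> toll x = 0"
    and "\<And>l. part_i (Suc h) \<le> l \<Longrightarrow> l < part_j h \<Longrightarrow> pairs l = parts ! h"
proof -
  let ?l = "part_i (Suc h)"
  have "0 < ?l" using part_i_strict_mono[of 0 "Suc h"] partition_chain(2) assms by simp
  moreover have "?l \<le> m" using monoD[OF mono_part_i, of "Suc h" q] partition_chain(3) assms by simp
  ultimately have block: "maxrev_block U L tolls pairs ?l" and le: "snd (pairs ?l) \<le> Suc m"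
    using maxrev_inv_result by (simp_all add: maxrev_inv_def)
  have pairs_l: "pairs ?l = (part_i h, part_j h)"
    using partition_chain(5)[OF assms] assms by (simp add: part_i_def part_j_def)
  note B = maxrev_blockD[OF block, unfolded pairs_l fst_conv snd_conv]
  show "?l < part_j h" by (rule B(2))
  show "part_j h \<le> Suc m" using le by (simp add: pairs_l)
  show "U (part_i h) (part_j h) = L (part_i h) (part_j h) + ereal (part_revenue h)"
    using B(3) by (simp add: part_revenue_def tolls_eq)
  show "toll x = 0" if "?l < x" "x < part_j h" for x
    using B(4)[OF that] by (simp add: tolls_eq)
  show "pairs l = parts ! h" if "?l \<le> l" "l < part_j h" for l
    using B(5)[OF that] partition_chain(5)[OF assms] pairs_l by simp
qed

lemma part_j_le_part_i:
  assumes "Suc h < q"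
  shows "part_j h \<le> part_i (Suc (Suc h))"
proof (rule ccontr)
  assume "\<not> ?thesis"
  moreover have "part_i (Suc h) \<le> part_i (Suc (Suc h))" using mono_part_i by (simp add: monoD)
  ultimately have "pairs (part_i (Suc (Suc h))) = parts ! h"
    using partition_block(5)[of h] assms by simp
  then have "parts ! Suc h = parts ! h" using partition_chain(5)[OF assms] by simp
  then have "part_i (Suc h) = part_i h" using assms by (simp add: part_i_def)
  then show False using part_i_strict_mono[of h "Suc h"] assms by simp
qed

lemma same_parity_parts_disjoint:
  assumes "h < h'" and "h' < q" and "even h = even h'"
  shows "part_j h \<le> part_i h'"
proof -
  have "Suc (Suc h) \<le> h'" using assms by presburger
  then show ?thesis
    using part_j_le_part_i[of h] monoD[OF mono_part_i, of "Suc (Suc h)" h'] assms by simp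
qed

lemma part_revenue_eq: "h < q \<Longrightarrow> part_revenue h = (\<Sum>x\<in>{part_i h<..part_i (Suc h)}. toll x)"
proof -
  assume h: "h < q"
  then have lt: "part_i h < part_i (Suc h)" "part_i (Suc h) < part_j h"
    using partition_chain(4) partition_block(1) by simp_all
  then have "part_revenue h = (\<Sum>x\<in>{Suc (part_i h)..<Suc (part_i (Suc h))}. toll x)
      + (\<Sum>x\<in>{Suc (part_i (Suc h))..<part_j h}. toll x)"
    unfolding part_revenue_def by (intro sum.atLeastLessThan_concat[symmetric]) simp_all
  also have "(\<Sum>x\<in>{Suc (part_i (Suc h))..<part_j h}. toll x) = 0"
    using partition_block(4)[OF h] by (intro sum.neutral) auto
  finally show ?thesis by (simp add: atLeastLessThanSuc_atLeastAtMost atLeastSucAtMost_greaterThanAtMost)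
qed

lemma revenue_eq_sum_part_revenue:
  "revenue AT AU ini ter c d s t P = ereal (\<Sum>h<q. part_revenue h)"
proof -
  have "(\<Sum>h<q. part_revenue h) = (\<Sum>h<q. \<Sum>x\<in>{part_i h<..part_i (Suc h)}. toll x)"
    by (simp add: part_revenue_eq)
  also have "\<dots> = (\<Sum>x\<in>{0<..m}. toll x)"
    using partition_chain(2,3) mono_part_i by (simp add: sum_intervals_telescope monoD)
  finally show ?thesis
    by (simp add: revenue_def tolls_eq atLeastSucAtMost_greaterThanAtMost[symmetric])
qed

lemma partition_cover: "m \<le> (\<Sum>h<q. part_j h - Suc (part_i h))"
proof -
  have "m = (\<Sum>h<q. card {part_i h<..part_i (Suc h)})"
    using sum_intervals_telescope[of q part_i "\<lambda>_. 1::nat"] partition_chain(2,3) mono_part_i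
    by (simp add: monoD)
  also have "\<dots> \<le> (\<Sum>h<q. part_j h - Suc (part_i h))"
    using partition_block(1) by (intro sum_mono) fastforce
  finally show ?thesis .
qed

lemma parts_nth: "h < q \<Longrightarrow> parts ! h = (part_i h, part_j h)"
  by (simp add: part_i_def part_j_def)

lemma selected_path_bounds:
  assumes sep: "\<And>h h'. h < h' \<Longrightarrow> h' < q \<Longrightarrow> sel h \<Longrightarrow> sel h' \<Longrightarrow> part_j h \<le> part_i h'"
  defines "P' \<equiv> splice AT P ups 0 [parts ! h. h \<leftarrow> [0..<q], sel h]"
  shows "mT AT P' + (\<Sum>h | h < q \<and> sel h. part_j h - Suc (part_i h)) = m"
    and "plen AT c d P' \<le> plen AT c d P + (\<Sum>h | h < q \<and> sel h. part_revenue h)"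
proof -
  define H where "H = filter sel [0..<q]"
  have "map ((!) parts) H = map (\<lambda>h. (part_i h, part_j h)) H"
    by (rule map_cong) (simp_all add: H_def parts_nth)
  then have P': "P' = splice AT P ups 0 (map (\<lambda>h. (part_i h, part_j h)) H)"
    unfolding P'_def map_filter_comprehension H_def[symmetric] by (simp only:)
  have ij: "part_i h < part_j h" "part_j h \<le> Suc m" if "h \<in> set H" for h
    using that partition_chain(4) partition_block(1,2) by (fastforce simp: H_def)+
  have "sorted_wrt (<) H" unfolding H_def by (intro sorted_wrt_filter sorted_wrt_upt)
  then have sorted: "sorted_wrt (\<lambda>h h'. part_j h \<le> part_i h') H"
    by (rule sorted_wrt_mono_rel[rotated]) (auto simp: H_def intro: sep)
  define S where "S = {h. h < q \<and> sel h}"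
  have H_S: "h \<in> set H \<longleftrightarrow> h \<in> S" for h by (auto simp: H_def S_def)
  have additive: "\<mu> P' + (\<Sum>h\<in>S. \<mu> (subpath AT P (part_i h) (part_j h)))
      = \<mu> P + (\<Sum>h\<in>S. \<mu> (ups (part_i h) (part_j h)))"
    if "\<And>xs ys. \<mu> (xs @ ys) = \<mu> xs + \<mu> ys" for \<mu> :: "'e list \<Rightarrow> nat"
    using splice_additive[OF that, of "map (\<lambda>h. (part_i h, part_j h)) H" AT P 0 ups] that[of "[]" "[]"]
      ij sorted
    by (simp add: P' sorted_wrt_map comp_def H_def S_def sum_list_filter_upt)
  have ups: "mT AT (ups (part_i h) (part_j h)) = 0"
    "plen AT c d (ups (part_i h) (part_j h)) \<le> plen AT c d (subpath AT P (part_i h) (part_j h)) + part_revenue h"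
    if "h \<in> S" for h
    using ups_detour_bound[OF ij[OF that[folded H_S]] partition_block(3)[of h]] that by (auto simp: S_def)
  show "mT AT P' + (\<Sum>h | h < q \<and> sel h. part_j h - Suc (part_i h)) = m"
    using additive[of "mT AT"] ups(1) ij by (simp add: H_S mT_subpath flip: S_def)
  have "real (plen AT c d P') + (\<Sum>h\<in>S. real (plen AT c d (subpath AT P (part_i h) (part_j h))))
      = real (plen AT c d P) + (\<Sum>h\<in>S. real (plen AT c d (ups (part_i h) (part_j h))))"
    using additive[of "plen AT c d"] by (simp flip: of_nat_sum of_nat_add)
  also have "\<dots> \<le> real (plen AT c d P)
      + (\<Sum>h\<in>S. real (plen AT c d (subpath AT P (part_i h) (part_j h))) + part_revenue h)"
    using ups(2) by (intro add_left_mono sum_mono) simp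
  finally show "plen AT c d P' \<le> plen AT c d P + (\<Sum>h | h < q \<and> sel h. part_revenue h)"
    by (simp add: sum.distrib S_def)
qed

lemma P1_bounds:
  "mT AT (P1 AT AU ini ter c d s t P ups) + (\<Sum>h | h < q \<and> even h. part_j h - Suc (part_i h)) = m"
  "plen AT c d (P1 AT AU ini ter c d s t P ups) \<le> plen AT c d P + (\<Sum>h | h < q \<and> even h. part_revenue h)"
  unfolding P1_def Let_def
  by (rule selected_path_bounds; simp add: same_parity_parts_disjoint)+

lemma P2_bounds:
  "mT AT (P2 AT AU ini ter c d s t P ups) + (\<Sum>h | h < q \<and> odd h. part_j h - Suc (part_i h)) = m"
  "plen AT c d (P2 AT AU ini ter c d s t P ups) \<le> plen AT c d P + (\<Sum>h | h < q \<and> odd h. part_revenue h)"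
  unfolding P2_def Let_def
  by (rule selected_path_bounds; simp add: same_parity_parts_disjoint)+

lemma toll_partition_cases:
  obtains "P2 AT AU ini ter c d s t P ups = P"
  | D1 D2 :: real where "2 \<le> m" and "mT AT (P1 AT AU ini ter c d s t P ups) < m"
    and "mT AT (P2 AT AU ini ter c d s t P ups) < m"
    and "mT AT (P1 AT AU ini ter c d s t P ups) + mT AT (P2 AT AU ini ter c d s t P ups) \<le> m"
    and "plen AT c d (P1 AT AU ini ter c d s t P ups) \<le> plen AT c d P + D1"
    and "plen AT c d (P2 AT AU ini ter c d s t P ups) \<le> plen AT c d P + D2"
    and "revenue AT AU ini ter c d s t P = ereal (D1 + D2)" and "0 \<le> D1 + D2"
proof (cases "q = 1")
  case True
  then have "[parts ! h. h \<leftarrow> [0..<q], odd h] = []"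
    unfolding map_filter_comprehension by simp
  then have "P2 AT AU ini ter c d s t P ups = P"
    unfolding P2_def Let_def by (simp only: splice.simps drop_0)
  then show ?thesis by (rule that(1))
next
  case False
  then have "2 \<le> q" using partition_chain(1) by linarith
  define w where "w h = part_j h - Suc (part_i h)" for h
  have w_pos: "0 < w h" if "h < q" for h
    using partition_chain(4)[OF that] partition_block(1)[OF that] by (simp add: w_def)
  have "w 0 \<le> (\<Sum>h | h < q \<and> even h. w h)"
    using \<open>2 \<le> q\<close> by (intro member_le_sum) auto
  moreover have "w 1 \<le> (\<Sum>h | h < q \<and> odd h. w h)"
    using \<open>2 \<le> q\<close> by (intro member_le_sum) auto
  moreover have "m \<le> (\<Sum>h | h < q \<and> even h. w h) + (\<Sum>h | h < q \<and> odd h. w h)"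
    using partition_cover by (simp add: sum_even_odd_split w_def)
  ultimately have "mT AT (P1 AT AU ini ter c d s t P ups) < m" and "mT AT (P2 AT AU ini ter c d s t P ups) < m"
    and "mT AT (P1 AT AU ini ter c d s t P ups) + mT AT (P2 AT AU ini ter c d s t P ups) \<le> m"
    using P1_bounds(1) P2_bounds(1) w_pos[of 0] w_pos[of 1] \<open>2 \<le> q\<close> unfolding w_def by linarith+
  moreover have "2 \<le> m"
    using part_i_strict_mono[of 0 1] part_i_strict_mono[of 1 2] monoD[OF mono_part_i, of 2 q]
      partition_chain(2,3) \<open>2 \<le> q\<close> by linarith
  moreover have "0 \<le> part_revenue h" for h by (simp add: part_revenue_def sum_nonneg toll_nonneg)
  then have "0 \<le> (\<Sum>h | h < q \<and> even h. part_revenue h) + (\<Sum>h | h < q \<and> odd h. part_revenue h)"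
    by (simp add: sum_nonneg)
  ultimately show ?thesis
    using that(2) P1_bounds(2) P2_bounds(2) revenue_eq_sum_part_revenue
    by (simp add: sum_even_odd_split)
qed

lemma Linf_finite:
  obtains lr where "Linf AT AU ini ter c d s t = ereal lr"
proof -
  have "Linf AT AU ini ter c d s t = U 0 (Suc m)" by (simp add: Linf_def UU_def TERMv_def INITv_def)
  moreover have "U 0 (Suc m) \<noteq> \<infinity>" using maxrev_admissible_UU_LL by (simp add: maxrev_admissible_def)
  moreover have "0 \<le> U 0 (Suc m)" by (simp add: UU_def dist_tf_nonneg)
  ultimately show ?thesis using that by (cases "U 0 (Suc m)") auto
qed

end

theorem theorem6:
  fixes V :: "'v set" and AT AU :: "'e set" and ini ter :: "'e \<Rightarrow> 'v"
    and c d :: "'e \<Rightarrow> nat" and s t :: 'v and P :: "'e list"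
    and ups :: "nat \<Rightarrow> nat \<Rightarrow> 'e list"
  assumes "toll_network V AT AU ini ter s t"
    and "\<exists>p. walk ini ter AU s p t"
    and "valid AT AU ini ter c d s t P"
    and "upsilon_choice AT AU ini ter c d s t P ups"
    and "revenue AT AU ini ter c d s t P
           < ereal (1 / alpha (mT AT P)) * BB AT AU ini ter c d s t P"
  shows "\<exists>P' \<in> {P1 AT AU ini ter c d s t P ups, P2 AT AU ini ter c d s t P ups}.
           ereal (1 / alpha (mT AT P')) * BB AT AU ini ter c d s t P'
             \<ge> ereal (1 / alpha (mT AT P)) * BB AT AU ini ter c d s t P"
proof -
  interpret valid_toll_path AT AU ini ter c d s t P ups
    using assms(1-4) by unfold_locales (simp_all add: toll_network_def valid_def)
  obtain lr where "Linf AT AU ini ter c d s t = ereal lr" by (rule Linf_finite)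
  then have B: "BB AT AU ini ter c d s t Q = ereal (lr - plen AT c d Q)" for Q
    by (simp add: BB_def)
  show ?thesis
  proof (cases rule: toll_partition_cases)
    case 1
    then show ?thesis by auto
  next
    case (2 D1 D2)
    let ?m1 = "mT AT (P1 AT AU ini ter c d s t P ups)" and ?m2 = "mT AT (P2 AT AU ini ter c d s t P ups)"
    have "(lr - plen AT c d P) / alpha m \<le> (lr - plen AT c d (P1 AT AU ini ter c d s t P ups)) / alpha ?m1
        \<or> (lr - plen AT c d P) / alpha m \<le> (lr - plen AT c d (P2 AT AU ini ter c d s t P ups)) / alpha ?m2"
      using 2 assms(5) by (intro ratio_split_bound alpha_ge_1 alpha_sum_le) (simp_all add: B)
    then show ?thesis by (auto simp: B)
  qed
qed

end
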